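(* Consider an execution of \texttt{ThresholdMonitor} (described in the context) on a database $S$, with parameters $\varepsilon,\delta,t,k$, interacting with a stream of $m$ adaptively chosen queries $f_1,f_2,\dots,f_m:X\to[0,1]$. Let $S_i$ denote the database $S$ as it is before answering the $i$th query. Then for every $\beta>0$, with probability at least $1-\beta$: (1) for every $i$ such that $a_i=\top$ it holds that $f_i(S_i)\geq t-\tilde{O}\left(\frac{1}{\varepsilon}\log\left(\frac{1}{\delta}\right)\log\left(\frac{m}{\beta}\right)\right)$; (2) for every $i$ such that $a_i=\bot$ it holds that $f_i(S_i)\leq t+\tilde{O}\left(\frac{1}{\varepsilon}\log\left(\frac{1}{\delta}\right)\log\left(\frac{m}{\beta}\right)\right)$.
   Context: $X$ is a data domain; a database $S$ is a finite multiset of elements of $X$. For a query $f:X\to[0,1]$ and database $D$, $f(D)=\sum_{x\in D}f(x)$. $\mathrm{Lap}(b)$ denotes the Laplace distribution with density $\frac{1}{2b}e^{-|x|/b}$. Algorithm \texttt{ThresholdMonitor}. Input: database $S$, privacy parameters $\varepsilon,\delta$, threshold $t$, parameter $k$, and an adaptively chosen stream of queries $f_i:X\to[0,1]$. Initialize a counter $c(x)=0$ for all $x\in X$. Let $\Delta=\frac{1}{\varepsilon}\log\left(\frac{1}{\delta}\right)\log\left(\frac{1}{\varepsilon}\log\frac{1}{\delta}\right)$. In each round $i$, on receiving $f_i$: sample independently $w_i\sim\mathrm{Lap}(10\Delta)$ and $v_i\sim\mathrm{Lap}(\frac{1}{\varepsilon}\log\frac{1}{\delta})$; set $\overline{v}_i=\min\{v_i,\Delta\}$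 and $\hat f_i=f_i(S)+w_i+\overline{v}_i$ (with $S$ the current database). If $\hat f_i<t$ output $a_i=\bot$. Otherwise output $a_i=\top$, set $c(x)\leftarrow c(x)+f_i(x)$ for every $x\in X$, and delete from $S$ every element $x$ with $c(x)\geq k$. Proceed to the next round. *)

theory Defs
  imports "HOL-Probability.Probability"
begin

definition laplace :: "real \<Rightarrow> real measure" where
  "laplace b = density lborel (\<lambda>x. ennreal (exp (- \<bar>x\<bar> / b) / (2 * b)))"

definition qval :: "('a \<Rightarrow> real) \<Rightarrow> 'a multiset \<Rightarrow> real" where
  "qval f D = sum_mset (image_mset f D)"

definition tm_L :: "real \<Rightarrow> real \<Rightarrow> real" where
  "tm_L \<epsilon> \<delta> = (1 / \<epsilon>) * ln (1 / \<delta>)"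

definition tm_Delta :: "real \<Rightarrow> real \<Rightarrow> real" where
  "tm_Delta \<epsilon> \<delta> = tm_L \<epsilon> \<delta> * ln (tm_L \<epsilon> \<delta>)"

definition tm_noise :: "real \<Rightarrow> real \<Rightarrow> nat \<Rightarrow> (nat \<Rightarrow> real \<times> real) measure" where
  "tm_noise \<epsilon> \<delta> m =
     PiM {..<m} (\<lambda>_. laplace (10 * tm_Delta \<epsilon> \<delta>) \<Otimes>\<^sub>M laplace (tm_L \<epsilon> \<delta>))"

text \<open>State of ThresholdMonitor before round i (0-indexed): current database S_i, counter c,
  and the list of answers a_0..a_{i-1} (True = top, False = bot).  The adaptive analyst
  adv chooses the next query as a function of the answers seen so far.\<close>
fun tm_state :: "real \<Rightarrow> real \<Rightarrow> real \<Rightarrow> real \<Rightarrow> (bool list \<Rightarrow> 'a \<Rightarrow> real) \<Rightarrow> 'a multiset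
    \<Rightarrow> (nat \<Rightarrow> real \<times> real) \<Rightarrow> nat \<Rightarrow> 'a multiset \<times> ('a \<Rightarrow> real) \<times> bool list" where
  "tm_state \<epsilon> \<delta> t k adv S0 noise 0 = (S0, (\<lambda>_. 0), [])"
| "tm_state \<epsilon> \<delta> t k adv S0 noise (Suc i) =
     (case tm_state \<epsilon> \<delta> t k adv S0 noise i of (S, c, as) \<Rightarrow>
       (let f = adv as;
            fh = qval f S + fst (noise i) + min (snd (noise i)) (tm_Delta \<epsilon> \<delta>)
        in if fh < t then (S, c, as @ [False])
           else (let c' = (\<lambda>x. c x + f x)
                 in (filter_mset (\<lambda>x. c' x < k) S, c', as @ [True]))))"

definition tm_db where "tm_db \<epsilon> \<delta> t k adv S0 noise i = fst (tm_state \<epsilon> \<delta> t k adv S0 noise i)"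
definition tm_query where
  "tm_query \<epsilon> \<delta> t k adv S0 noise i = adv (snd (snd (tm_state \<epsilon> \<delta> t k adv S0 noise i)))"
definition tm_ans where
  "tm_ans \<epsilon> \<delta> t k adv S0 noise i = last (snd (snd (tm_state \<epsilon> \<delta> t k adv S0 noise (Suc i))))"

end

theory Submission imports Defs begin

text \<open>Outside an event of probability at most \<open>\<beta>\<close> every noise sample is small: the Laplace
  tail \<open>P(|Lap(b)| > b q) = e\<^sup>-\<^sup>q\<close> with \<open>q = ln (2m/\<beta>)\<close> and a union bound over the \<open>2m\<close>
  samples (here Bernoulli's inequality) give \<open>|w\<^sub>i| \<le> 10 \<Delta> q\<close> and \<open>|v\<^sub>i| \<le> L q\<close> for all \<open>i < m\<close>.
  On that event the noisy value \<open>f\<^sub>i(S\<^sub>i) + w\<^sub>i + min v\<^sub>i \<Delta>\<close> is within \<open>(10 \<Delta> + L) q\<close> of the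
  true answer, since the truncation at \<open>\<Delta> > 0\<close> only matters for positive \<open>v\<^sub>i\<close>; and
  \<open>(10 \<Delta> + L) q \<le> 10 L (1 + ln L) (1 + ln (m/\<beta>))\<close>.\<close>

lemma laplace_density_has_integral_interval:
  fixes b s :: real
  assumes b: "b > 0" and s: "s \<ge> 0"
  shows "((\<lambda>x. exp (- \<bar>x\<bar> / b) / (2 * b)) has_integral (1 - exp (- s / b))) {-s..s}"
proof -
  have "((\<lambda>x. exp (x / b) / 2) has_vector_derivative exp (x / b) / (2 * b)) (at x within {-s..0})"
    for x using b
    by (auto intro!: derivative_eq_intros
        simp: has_real_derivative_iff_has_vector_derivative[symmetric] field_simps)
  from fundamental_theorem_of_calculus[OF _ this] s
  have "((\<lambda>x. exp (x / b) / (2 * b)) has_integral (1/2 - exp (- s / b) / 2)) {-s..0}"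
    by simp
  then have left: "((\<lambda>x. exp (- \<bar>x\<bar> / b) / (2 * b)) has_integral (1/2 - exp (- s / b) / 2)) {-s..0}"
    by (rule has_integral_eq[rotated]) auto
  have "((\<lambda>x. - exp (- x / b) / 2) has_vector_derivative exp (- x / b) / (2 * b)) (at x within {0..s})"
    for x using b
    by (auto intro!: derivative_eq_intros
        simp: has_real_derivative_iff_has_vector_derivative[symmetric] field_simps)
  from fundamental_theorem_of_calculus[OF _ this] s
  have "((\<lambda>x. exp (- x / b) / (2 * b)) has_integral (1/2 - exp (- s / b) / 2)) {0..s}"
    by simp
  then have right: "((\<lambda>x. exp (- \<bar>x\<bar> / b) / (2 * b)) has_integral (1/2 - exp (- s / b) / 2)) {0..s}"
    by (rule has_integral_eq[rotated]) auto
  from has_integral_combine[OF _ _ left right] s show ?thesis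
    by simp
qed

lemma emeasure_laplace_interval:
  fixes b s :: real
  assumes "b > 0" and "s \<ge> 0"
  shows "emeasure (laplace b) {-s..s} = ennreal (1 - exp (- s / b))"
proof -
  have "emeasure (laplace b) {-s..s} =
      (\<integral>\<^sup>+ x. ennreal (exp (- \<bar>x\<bar> / b) / (2 * b)) * indicator {-s..s} x \<partial>lborel)"
    unfolding laplace_def by (subst emeasure_density) auto
  also have "\<dots> = ennreal (1 - exp (- s / b))"
    using assms
    by (intro nn_integral_has_integral_lebesgue' laplace_density_has_integral_interval) auto
  finally show ?thesis .
qed

lemma sets_laplace [simp]: "sets (laplace b) = sets borel"
  unfolding laplace_def by simp

lemma sigma_finite_laplace: "sigma_finite_measure (laplace b)"
  unfolding laplace_def
  by (subst sigma_finite_measure.sigma_finite_iff_density_finite)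
    (auto intro: lborel.sigma_finite_measure_axioms)

lemma emeasure_PiM_PiE_const:
  assumes "sigma_finite_measure M" and "finite I" and "R \<in> sets M"
  shows "emeasure (PiM I (\<lambda>_. M)) (PiE I (\<lambda>_. R)) = emeasure M R ^ card I"
proof -
  interpret product_sigma_finite "\<lambda>_. M"
    using assms(1) by (simp add: product_sigma_finite_def)
  show ?thesis
    using assms(2,3) by (simp add: emeasure_PiM)
qed

definition noise_box :: "nat \<Rightarrow> real \<Rightarrow> real \<Rightarrow> (nat \<Rightarrow> real \<times> real) set" where
  "noise_box m sw sv = PiE {..<m} (\<lambda>_. {-sw..sw} \<times> {-sv..sv})"

lemma noise_box_sets: "noise_box m sw sv \<in> sets (tm_noise \<epsilon> \<delta> m)"
  unfolding noise_box_def tm_noise_def by (rule sets_PiM_I_finite) auto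

lemma measure_laplace_pairs_noise_box:
  assumes "0 < bw" and "0 < bv" and "0 \<le> q"
  shows "measure (PiM {..<m} (\<lambda>_. laplace bw \<Otimes>\<^sub>M laplace bv)) (noise_box m (bw * q) (bv * q))
           = (1 - exp (- q)) ^ (2 * m)"
proof -
  interpret bv: sigma_finite_measure "laplace bv"
    by (rule sigma_finite_laplace)
  have pair: "emeasure (laplace bw \<Otimes>\<^sub>M laplace bv) ({- (bw * q)..bw * q} \<times> {- (bv * q)..bv * q})
      = ennreal ((1 - exp (- q)) ^ 2)"
    using assms
    by (simp add: bv.emeasure_pair_measure_Times emeasure_laplace_interval
        ennreal_mult[symmetric] power2_eq_square)
  have "emeasure (PiM {..<m} (\<lambda>_. laplace bw \<Otimes>\<^sub>M laplace bv)) (noise_box m (bw * q) (bv * q))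
      = ennreal ((1 - exp (- q)) ^ (2 * m))"
    unfolding noise_box_def
    by (simp add: emeasure_PiM_PiE_const sigma_finite_pair_measure sigma_finite_laplace pair
        ennreal_power power_mult)
  then show ?thesis
    by (simp add: measure_def)
qed

(* For m = 0 both bounds hold only because ln 0 = 0. *)
lemma ln_quantile_bounds:
  fixes \<beta> :: real
  assumes "0 < \<beta>" and "\<beta> \<le> 1"
  shows "0 \<le> ln (2 * real m / \<beta>) \<and> ln (2 * real m / \<beta>) \<le> 1 + ln (real m / \<beta>)"
proof (cases "m = 0")
  case False
  then have "real m / \<beta> \<ge> 1"
    using assms by (simp add: field_simps)
  moreover have "ln (2 * real m / \<beta>) = ln 2 + ln (real m / \<beta>)"
    using calculation by (simp add: ln_mult_pos flip: times_divide_eq_right)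
  ultimately show ?thesis
    using ln_2_less_1 by simp
qed simp

lemma one_minus_le_union_bound_power:
  fixes \<beta> :: real
  assumes "0 < \<beta>" and "\<beta> \<le> 1"
  shows "1 - \<beta> \<le> (1 - exp (- ln (2 * real m / \<beta>))) ^ (2 * m)"
proof (cases "m = 0")
  case False
  define x where "x = \<beta> / (2 * real m)"
  have "exp (- ln (2 * real m / \<beta>)) = x"
    using False assms by (simp add: x_def exp_minus)
  moreover have "1 - \<beta> = 1 + real (2 * m) * (- x)"
    using False by (simp add: x_def)
  moreover have "1 + real (2 * m) * (- x) \<le> (1 + - x) ^ (2 * m)"
    using False assms by (intro Bernoulli_inequality) (simp add: x_def field_simps)
  ultimately show ?thesis
    by simp
qed (use assms in simp)

lemma tm_ans_iff:
  "tm_ans \<epsilon> \<delta> t k adv S \<omega> i \<longleftrightarrow>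
     t \<le> qval (tm_query \<epsilon> \<delta> t k adv S \<omega> i) (tm_db \<epsilon> \<delta> t k adv S \<omega> i)
          + fst (\<omega> i) + min (snd (\<omega> i)) (tm_Delta \<epsilon> \<delta>)"
proof -
  obtain D c as where "tm_state \<epsilon> \<delta> t k adv S \<omega> i = (D, c, as)"
    by (metis prod.exhaust)
  then show ?thesis
    by (simp add: tm_ans_def tm_query_def tm_db_def Let_def not_less)
qed

lemma tm_answers_accurate_on_noise_box:
  assumes "\<omega> \<in> noise_box m sw sv" and "0 \<le> tm_Delta \<epsilon> \<delta>" and "sw + sv \<le> B"
  shows "\<forall>i < m.
           (tm_ans \<epsilon> \<delta> t k adv S \<omega> i \<longrightarrow>
              qval (tm_query \<epsilon> \<delta> t k adv S \<omega> i) (tm_db \<epsilon> \<delta> t k adv S \<omega> i) \<ge> t - B) \<and>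
           (\<not> tm_ans \<epsilon> \<delta> t k adv S \<omega> i \<longrightarrow>
              qval (tm_query \<epsilon> \<delta> t k adv S \<omega> i) (tm_db \<epsilon> \<delta> t k adv S \<omega> i) \<le> t + B)"
proof (intro allI impI)
  fix i assume "i < m"
  with assms(1) have "\<omega> i \<in> {-sw..sw} \<times> {-sv..sv}"
    by (auto simp: noise_box_def)
  with assms(2,3) show "(tm_ans \<epsilon> \<delta> t k adv S \<omega> i \<longrightarrow>
              qval (tm_query \<epsilon> \<delta> t k adv S \<omega> i) (tm_db \<epsilon> \<delta> t k adv S \<omega> i) \<ge> t - B) \<and>
           (\<not> tm_ans \<epsilon> \<delta> t k adv S \<omega> i \<longrightarrow>
              qval (tm_query \<epsilon> \<delta> t k adv S \<omega> i) (tm_db \<epsilon> \<delta> t k adv S \<omega> i) \<le> t + B)"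
    unfolding tm_ans_iff by (auto simp: min_def)
qed

lemma tm_L_pos: "0 < \<epsilon> \<Longrightarrow> 0 < \<delta> \<Longrightarrow> \<delta> < 1 \<Longrightarrow> 0 < tm_L \<epsilon> \<delta>"
  by (simp add: tm_L_def)

lemma noise_radius_le:
  assumes "0 < tm_L \<epsilon> \<delta>" and "0 < tm_Delta \<epsilon> \<delta>" and "0 \<le> q" and "q \<le> r"
  shows "10 * tm_Delta \<epsilon> \<delta> * q + tm_L \<epsilon> \<delta> * q \<le> 10 * tm_L \<epsilon> \<delta> * (1 + ln (tm_L \<epsilon> \<delta>)) * r"
proof -
  have "0 < ln (tm_L \<epsilon> \<delta>)"
    using assms(1,2) by (simp add: tm_Delta_def zero_less_mult_iff)
  have "10 * tm_Delta \<epsilon> \<delta> * q + tm_L \<epsilon> \<delta> * q = (10 * tm_L \<epsilon> \<delta> * ln (tm_L \<epsilon> \<delta>) + tm_L \<epsilon> \<delta>) * q"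
    by (simp add: tm_Delta_def algebra_simps)
  also have "\<dots> \<le> 10 * tm_L \<epsilon> \<delta> * (1 + ln (tm_L \<epsilon> \<delta>)) * r"
    using assms \<open>0 < ln (tm_L \<epsilon> \<delta>)\<close> by (intro mult_mono) (auto simp: algebra_simps)
  finally show ?thesis .
qed

lemma tm_accuracy_event:
  fixes m :: nat and \<beta> :: real
  assumes L: "0 < tm_L \<epsilon> \<delta>" and \<Delta>: "0 < tm_Delta \<epsilon> \<delta>" and "0 < \<beta>"
  defines "B \<equiv> 10 * tm_L \<epsilon> \<delta> * (1 + ln (tm_L \<epsilon> \<delta>)) * (1 + ln (real m / \<beta>))"
  shows "\<exists>A \<in> sets (tm_noise \<epsilon> \<delta> m).
           measure (tm_noise \<epsilon> \<delta> m) A \<ge> 1 - \<beta> \<and>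
           (\<forall>\<omega> \<in> A. \<forall>i < m.
              (tm_ans \<epsilon> \<delta> t k adv S \<omega> i \<longrightarrow>
                 qval (tm_query \<epsilon> \<delta> t k adv S \<omega> i) (tm_db \<epsilon> \<delta> t k adv S \<omega> i) \<ge> t - B) \<and>
              (\<not> tm_ans \<epsilon> \<delta> t k adv S \<omega> i \<longrightarrow>
                 qval (tm_query \<epsilon> \<delta> t k adv S \<omega> i) (tm_db \<epsilon> \<delta> t k adv S \<omega> i) \<le> t + B))"
proof (cases "1 \<le> \<beta>")
  case True
  then show ?thesis
    by (intro bexI[of _ "{}"]) auto
next
  case False
  with \<open>0 < \<beta>\<close> have \<beta>: "0 < \<beta>" "\<beta> \<le> 1"
    by simp_all
  define q where "q = ln (2 * real m / \<beta>)"
  note q = ln_quantile_bounds[OF \<beta>, of m, folded q_def]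
  let ?A = "noise_box m (10 * tm_Delta \<epsilon> \<delta> * q) (tm_L \<epsilon> \<delta> * q)"
  have "1 - \<beta> \<le> measure (tm_noise \<epsilon> \<delta> m) ?A"
    using one_minus_le_union_bound_power[OF \<beta>, of m] L \<Delta> q
    by (simp add: tm_noise_def measure_laplace_pairs_noise_box q_def)
  moreover have "10 * tm_Delta \<epsilon> \<delta> * q + tm_L \<epsilon> \<delta> * q \<le> B"
    unfolding B_def using q by (intro noise_radius_le[OF L \<Delta>]) auto
  ultimately show ?thesis
    using tm_answers_accurate_on_noise_box[OF _ less_imp_le[OF \<Delta>]] noise_box_sets by blast
qed

theorem theorem3p1:
  "\<exists>C (K::nat). C > 0 \<and>
    (\<forall>(\<epsilon>::real) (\<delta>::real) (t::real) (k::real) (m::nat) (\<beta>::real)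
        (adv :: bool list \<Rightarrow> 'a \<Rightarrow> real) (S :: 'a multiset).
      0 < \<epsilon> \<longrightarrow> 0 < \<delta> \<longrightarrow> \<delta> < 1 \<longrightarrow> 0 < tm_Delta \<epsilon> \<delta> \<longrightarrow>
      (\<forall>as x. 0 \<le> adv as x \<and> adv as x \<le> 1) \<longrightarrow> 0 < \<beta> \<longrightarrow>
      (let B = C * tm_L \<epsilon> \<delta> * (1 + ln (tm_L \<epsilon> \<delta>)) ^ K * (1 + ln (real m / \<beta>))
       in \<exists>A \<in> sets (tm_noise \<epsilon> \<delta> m).
            measure (tm_noise \<epsilon> \<delta> m) A \<ge> 1 - \<beta> \<and>
            (\<forall>\<omega> \<in> A. \<forall>i < m.
               (tm_ans \<epsilon> \<delta> t k adv S \<omega> i \<longrightarrow>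
                  qval (tm_query \<epsilon> \<delta> t k adv S \<omega> i) (tm_db \<epsilon> \<delta> t k adv S \<omega> i) \<ge> t - B) \<and>
               (\<not> tm_ans \<epsilon> \<delta> t k adv S \<omega> i \<longrightarrow>
                  qval (tm_query \<epsilon> \<delta> t k adv S \<omega> i) (tm_db \<epsilon> \<delta> t k adv S \<omega> i) \<le> t + B))))"
  \<comment> \<open>Accuracy holds for arbitrary real-valued queries.\<close>
  by (intro exI[of _ "10::real"] exI[of _ "1::nat"] conjI allI impI)
    (simp_all add: Let_def tm_accuracy_event tm_L_pos)

end
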